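(* Let $S$ be a closed surface equipped with a Euclidean metric with conical singularities $s_1,\dots,s_l,s_{l+1},\dots,s_n$ ($l\leq n$), where $\theta(s_i)\in(0,\pi)$ for $i=1,\dots,l$ and $\theta(s_i)\in(2\pi,\infty)$ for $i=l+1,\dots,n$. Then there exists a real number $C>0$ such that for every geodesic $g$ in $S$, $d(g(t),s_i)\geq C$ for all $i=1,\dots,l$ and all $t\in\mathbb{R}$.
   Context: A Euclidean surface with conical singularities: every non-singular point has a neighbourhood isometric to a Euclidean disk, each singular point $s$ has a neighbourhood isometric to a neighbourhood of the vertex of the standard cone $\{(r,t): r\geq0, t\in\mathbb{R}/\theta(s)\mathbb{Z}\}$ with metric $dr^2+r^2dt^2$, $\theta(s)$ being the cone angle. Here a geodesic means a local isometric map $g:\mathbb{R}\to S$ with no homotopically trivial self-intersections (i.e. there are no $t_1<t_2$ with $g(t_1)=g(t_2)$ and $g|_{[t_1,t_2]}$ a contractible loop); equivalently, its lift to the universal cover of $S$ is a global isometric map. *)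

theory Defs
  imports "HOL-Analysis.Analysis"
begin

text \<open>The standard cone of angle th: points (r,t) with r >= 0 and t in [0,th)
  (representing R/th Z); all points with r = 0 are identified with the vertex (0,0).\<close>

definition cone_carrier :: "real \<Rightarrow> (real \<times> real) set" where
  "cone_carrier th = {(r, t). 0 \<le> r \<and> 0 \<le> t \<and> t < th \<and> (r = 0 \<longrightarrow> t = 0)}"

definition cone_vertex :: "real \<times> real" where
  "cone_vertex = (0, 0)"

definition cone_angdist :: "real \<Rightarrow> real \<Rightarrow> real \<Rightarrow> real" where
  "cone_angdist th t1 t2 = min \<bar>t1 - t2\<bar> (th - \<bar>t1 - t2\<bar>)"

text \<open>Intrinsic (length) distance of the metric dr^2 + r^2 dt^2 on the cone of angle th.\<close>
definition cone_dist :: "real \<Rightarrow> real \<times> real \<Rightarrow> real \<times> real \<Rightarrow> real" where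
  "cone_dist th p q =
     (case p of (r1, t1) \<Rightarrow> case q of (r2, t2) \<Rightarrow>
        (let phi = cone_angdist th t1 t2 in
         if phi < pi then sqrt (r1\<^sup>2 + r2\<^sup>2 - 2 * r1 * r2 * cos phi) else r1 + r2))"

definition flat_point :: "'a::metric_space \<Rightarrow> bool" where
  "flat_point p \<longleftrightarrow>
     (\<exists>U (f :: 'a \<Rightarrow> real^2) c r. open U \<and> p \<in> U \<and> 0 < r \<and> f ` U = ball c r \<and>
        (\<forall>x\<in>U. \<forall>y\<in>U. dist (f x) (f y) = dist x y))"

definition conical_point :: "real \<Rightarrow> 'a::metric_space \<Rightarrow> bool" where
  "conical_point th p \<longleftrightarrow>
     (\<exists>U (f :: 'a \<Rightarrow> real \<times> real) r. open U \<and> p \<in> U \<and> 0 < r \<and> f p = cone_vertex \<and>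
        f ` U = {q \<in> cone_carrier th. fst q < r} \<and>
        (\<forall>x\<in>U. \<forall>y\<in>U. cone_dist th (f x) (f y) = dist x y))"

definition euclidean_cone_metric :: "'a::metric_space set \<Rightarrow> ('a \<Rightarrow> real) \<Rightarrow> bool" where
  "euclidean_cone_metric Sing th \<longleftrightarrow>
     finite Sing \<and> (\<forall>p. p \<notin> Sing \<longrightarrow> flat_point p) \<and>
     (\<forall>s\<in>Sing. 0 < th s \<and> conical_point (th s) s)"

definition local_isometric :: "(real \<Rightarrow> 'a::metric_space) \<Rightarrow> bool" where
  "local_isometric g \<longleftrightarrow>
     (\<forall>t. \<exists>e>0. \<forall>a\<in>ball t e. \<forall>b\<in>ball t e. dist (g a) (g b) = dist a b)"

definition geodesic :: "(real \<Rightarrow> 'a::metric_space) \<Rightarrow> bool" where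
  "geodesic g \<longleftrightarrow> local_isometric g \<and>
     \<not> (\<exists>t1 t2. t1 < t2 \<and> g t1 = g t2 \<and>
          (\<exists>a. homotopic_loops UNIV (g \<circ> (\<lambda>u. t1 + u * (t2 - t1))) (\<lambda>u. a)))"

end

theory Submission
  imports Defs
begin

text \<open>Let s be a cone point of angle th < pi and let a geodesic g pass at distance d from s.
  Developing the cone neighbourhood of s onto the plane (polar coordinates about s, with the
  angle lifted continuously along g), the geodesic becomes a unit speed straight line at
  distance d from the origin. Seen from the origin such a line sweeps an angle th in time
  2 d tan (th / 2), symmetrically about its closest approach; the two endpoints of this time
  interval have the same distance to s and the same angle modulo th, so they are the same
  point of S. The closed arc between them stays in the cone neighbourhood, which contracts
  radially onto s, so it is a homotopically trivial self-intersection, which a geodesic does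
  not have. Hence near each such s the distance d is bounded below by a constant depending
  only on the size of the neighbourhood, and there are finitely many cone points.\<close>

lemma cone_angdist_bounds:
  assumes "0 \<le> t1" "t1 < th" "0 \<le> t2" "t2 < th"
  shows "0 \<le> cone_angdist th t1 t2" "cone_angdist th t1 t2 \<le> th / 2"
  using assms by (auto simp: cone_angdist_def min_def abs_if)

lemma cone_angdist_commute: "cone_angdist th t t' = cone_angdist th t' t"
  by (simp add: cone_angdist_def abs_minus_commute)

lemma cone_dist_law_of_cosines:
  assumes "th < pi" "0 \<le> t1" "t1 < th" "0 \<le> t2" "t2 < th"
  shows "cone_dist th (r1, t1) (r2, t2) = sqrt (r1\<^sup>2 + r2\<^sup>2 - 2 * r1 * r2 * cos (cone_angdist th t1 t2))"
proof -
  have "cone_angdist th t1 t2 < pi"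
    using cone_angdist_bounds(2)[OF assms(2-5)] assms(1) pi_gt_zero by linarith
  then show ?thesis by (simp add: cone_dist_def Let_def)
qed

lemma law_of_cosines_nonneg:
  fixes a b c :: real
  assumes "0 \<le> a" "0 \<le> b" "c \<le> 1"
  shows "0 \<le> a\<^sup>2 + b\<^sup>2 - 2 * a * b * c"
proof -
  have "a\<^sup>2 + b\<^sup>2 - 2 * a * b * c = (a - b)\<^sup>2 + 2 * (a * b) * (1 - c)"
    by (simp add: power2_eq_square algebra_simps)
  then show ?thesis using assms by simp
qed

lemma local_isometric_uniformly:
  assumes "local_isometric g" "compact K"
  obtains d where "0 < d" "\<And>u u'. u \<in> K \<Longrightarrow> \<bar>u - u'\<bar> < d \<Longrightarrow> dist (g u) (g u') = \<bar>u - u'\<bar>"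
proof -
  obtain e where e: "\<And>t. 0 < e t" "\<And>t a b. a \<in> ball t (e t) \<Longrightarrow> b \<in> ball t (e t) \<Longrightarrow> dist (g a) (g b) = dist a b"
    using assms(1) unfolding local_isometric_def by metis
  have "K \<subseteq> (\<Union>t. ball t (e t))"
    using e(1) centre_in_ball by blast
  from Heine_Borel_lemma[OF assms(2) this] obtain d where d: "0 < d"
    "\<And>x. x \<in> K \<Longrightarrow> \<exists>G \<in> range (\<lambda>t. ball t (e t)). ball x d \<subseteq> G" by auto
  show ?thesis
  proof (rule that[OF d(1)])
    fix u u' assume "u \<in> K" "\<bar>u - u'\<bar> < d"
    moreover obtain t where "ball u d \<subseteq> ball t (e t)" using d(2) \<open>u \<in> K\<close> by blast
    moreover have "u \<in> ball u d" "u' \<in> ball u d"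
      using \<open>\<bar>u - u'\<bar> < d\<close> d(1) by (auto simp: dist_real_def)
    ultimately have "u \<in> ball t (e t)" "u' \<in> ball t (e t)" by blast+
    then show "dist (g u) (g u') = \<bar>u - u'\<bar>" using e(2) by (simp add: dist_real_def)
  qed
qed

lemma local_isometric_dist_le:
  assumes "local_isometric g"
  shows "dist (g a) (g b) \<le> \<bar>a - b\<bar>"
proof -
  have le: "dist (g a) (g b) \<le> b - a" if "a \<le> b" for a b
  proof -
    obtain d where d: "0 < d" "\<And>u u'. u \<in> {a..b} \<Longrightarrow> \<bar>u - u'\<bar> < d \<Longrightarrow> dist (g u) (g u') = \<bar>u - u'\<bar>"
      using local_isometric_uniformly[OF assms, of "{a..b}"] by auto
    obtain N :: nat where N: "(b - a) / d < N" using reals_Archimedean2 by blast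
    moreover have "0 \<le> (b - a) / d" using d(1) that by simp
    ultimately have "0 < N" by (metis of_nat_0_less_iff le_less_trans)
    define h where "h = (b - a) / N"
    have h: "0 \<le> h" "h < d" "real N * h = b - a"
      using N d(1) that \<open>0 < N\<close> by (simp_all add: h_def field_simps)
    have "dist (g a) (g (a + k * h)) \<le> k * h" if "k \<le> N" for k
      using that
    proof (induction k)
      case (Suc k)
      have "real k * h \<le> real N * h" using Suc.prems h(1) by (intro mult_right_mono) auto
      then have "dist (g (a + k * h)) (g (a + Suc k * h)) = h"
        using d(2)[of "a + k * h" "a + Suc k * h"] h by (simp add: algebra_simps)
      then show ?case
        using Suc dist_triangle[of "g a" "g (a + Suc k * h)" "g (a + k * h)"] by (simp add: algebra_simps)
    qed simp
    from this[of N] show ?thesis using h(3) by simp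
  qed
  show ?thesis
    using le[of a b] le[of b a] by (cases "a \<le> b") (auto simp: dist_commute)
qed

lemma local_isometric_lipschitz:
  assumes "local_isometric g"
  shows "1-lipschitz_on S g"
  using local_isometric_dist_le[OF assms] by (intro lipschitz_onI) (auto simp: dist_real_def)

lemma norm_cis_diff_le: "cmod (cis x - cis y) \<le> \<bar>x - y\<bar>"
proof -
  define d where "d = x - y"
  have "cis x - cis y = cis y * (cis d - 1)" by (simp add: d_def cis_divide[symmetric] field_simps)
  then have n: "cmod (cis x - cis y) = cmod (cis d - 1)" by (simp add: norm_mult)
  have "(cmod (cis d - 1))\<^sup>2 = (cos d - 1)\<^sup>2 + (sin d)\<^sup>2" by (simp add: cmod_power2)
  also have "\<dots> = 2 - 2 * cos d" using sin_cos_squared_add[of d] by (simp add: power2_eq_square algebra_simps)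
  also have "\<dots> = 4 * (sin (d / 2))\<^sup>2" using cos_double_sin[of "d / 2"] by simp
  also have "\<dots> \<le> d\<^sup>2"
  proof -
    have "(sin (d / 2))\<^sup>2 \<le> (d / 2)\<^sup>2"
      using abs_sin_x_le_abs_x[of "d / 2"] by (metis power2_abs power_mono abs_ge_zero)
    then show ?thesis by (simp add: power2_eq_square)
  qed
  finally have "(cmod (cis d - 1))\<^sup>2 \<le> \<bar>d\<bar>\<^sup>2" by simp
  then have "cmod (cis d - 1) \<le> \<bar>d\<bar>" by (rule power2_le_imp_le) simp
  then show ?thesis using n d_def by simp
qed

lemma cone_angdist_eq_abs_shift:
  fixes th t t' :: real
  assumes "0 \<le> t" "t < th" "0 \<le> t'" "t' < th"
  obtains j :: int where "cone_angdist th t t' = \<bar>t - t' + j * th\<bar>"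
proof (cases "\<bar>t - t'\<bar> \<le> th - \<bar>t - t'\<bar>")
  case True
  then show ?thesis using that[of 0] by (simp add: cone_angdist_def)
next
  case False
  then have "cone_angdist th t t' = th - \<bar>t - t'\<bar>" by (simp add: cone_angdist_def)
  moreover have "th - \<bar>t - t'\<bar> = \<bar>t - t' + of_int (if t' \<le> t then -1 else 1) * th\<bar>"
    using assms by (cases "t' \<le> t") (simp_all add: abs_of_neg abs_of_pos)
  ultimately show ?thesis by (rule that[OF trans])
qed

lemma norm_cis_diff_le_cone_angdist:
  assumes "0 < th" "0 \<le> t" "t < th" "0 \<le> t'" "t' < th"
  shows "cmod (cis (2 * pi * t / th) - cis (2 * pi * t' / th)) \<le> 2 * pi / th * cone_angdist th t t'"
proof -
  obtain j :: int where j: "cone_angdist th t t' = \<bar>t - t' + j * th\<bar>"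
    using cone_angdist_eq_abs_shift[OF assms(2-5)] .
  have "cis (2 * pi * t / th) = cis (2 * pi * (t + j * th) / th)"
  proof -
    have "2 * pi * (t + j * th) / th = 2 * pi * t / th + 2 * pi * of_int j"
      using assms(1) by (simp add: field_simps)
    then show ?thesis by (simp add: cis_mult[symmetric])
  qed
  moreover have "\<bar>2 * pi * (t + j * th) / th - 2 * pi * t' / th\<bar> = 2 * pi / th * \<bar>t - t' + j * th\<bar>"
  proof -
    have "2 * pi * (t + j * th) / th - 2 * pi * t' / th = 2 * pi / th * (t - t' + j * th)"
      using assms(1) by (simp add: field_simps)
    then show ?thesis using assms(1) by (simp add: abs_mult)
  qed
  ultimately show ?thesis
    using norm_cis_diff_le[of "2 * pi * (t + j * th) / th" "2 * pi * t' / th"] j by simp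
qed

lemma cone_angdist_of_lift:
  assumes "0 < th" "0 \<le> t" "t < th" "0 \<le> t'" "t' < th"
    and "t = x + of_int k * th" "t' = x' + of_int k' * th" "\<bar>x - x'\<bar> < th / 2"
  shows "cone_angdist th t t' = \<bar>x - x'\<bar>"
proof -
  define j where "j = k - k'"
  have tt: "t - t' = (x - x') + of_int j * th" using assms(6,7) by (simp add: j_def algebra_simps)
  have "\<bar>of_int j * th\<bar> \<le> \<bar>t - t'\<bar> + \<bar>x - x'\<bar>"
    using abs_triangle_ineq4[of "t - t'" "x - x'"] tt by simp
  moreover have "\<bar>t - t'\<bar> < th" using assms(2-5) by auto
  ultimately have "\<bar>of_int j * th\<bar> < 3 / 2 * th" using assms(8) by linarith
  then have "\<bar>real_of_int j\<bar> < 3 / 2" using assms(1) by (simp add: abs_mult)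
  then have "j = -1 \<or> j = 0 \<or> j = 1" by linarith
  then show ?thesis using tt assms(1-5,8) by (auto simp: cone_angdist_def abs_if min_def)
qed

lemma norm_polar_diff_squared:
  "(cmod (of_real a * cis x - of_real b * cis y))\<^sup>2 = a\<^sup>2 + b\<^sup>2 - 2 * a * b * cos (x - y)"
proof -
  have "(cmod (of_real a * cis x - of_real b * cis y))\<^sup>2
      = (a * cos x - b * cos y)\<^sup>2 + (a * sin x - b * sin y)\<^sup>2"
    by (simp add: cmod_power2)
  also have "\<dots> = a\<^sup>2 * ((sin x)\<^sup>2 + (cos x)\<^sup>2) + b\<^sup>2 * ((sin y)\<^sup>2 + (cos y)\<^sup>2)
      - 2 * a * b * (cos x * cos y + sin x * sin y)"
    by (simp only: power2_eq_square) algebra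
  finally show ?thesis by (simp only: sin_cos_squared_add cos_diff mult_1_right)
qed

lemma isometric_triple_proportional:
  fixes P :: "real \<Rightarrow> complex"
  assumes "x < y" "y < z"
    and "cmod (P z - P x) = z - x" "cmod (P y - P x) = y - x" "cmod (P z - P y) = z - y"
  shows "P y - P x = of_real ((y - x) / (z - x)) * (P z - P x)"
proof -
  define v1 where "v1 = P y - P x"
  define v2 where "v2 = P z - P y"
  have "norm (v1 + v2) = norm v1 + norm v2" using assms by (simp add: v1_def v2_def)
  then have "norm v1 *\<^sub>R v2 = norm v2 *\<^sub>R v1" by (simp add: norm_triangle_eq)
  then have "of_real (y - x) * v2 = of_real (z - y) * v1"
    using assms by (simp add: v1_def v2_def scaleR_conv_of_real)
  then have "of_real (z - x) * v1 = of_real (y - x) * (v1 + v2)" by (simp add: algebra_simps)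
  then have "v1 = of_real ((y - x) / (z - x)) * (v1 + v2)" using assms(1,2) by (simp add: field_simps)
  then show ?thesis by (simp add: v1_def v2_def)
qed

lemma isometric_triple_on_line:
  fixes P :: "real \<Rightarrow> complex"
  assumes "x < y" "y < z"
    and "cmod (P z - P x) = z - x" "cmod (P y - P x) = y - x" "cmod (P z - P y) = z - y"
  shows "P y - P x = of_real (y - x) * w \<longleftrightarrow> P z - P x = of_real (z - x) * w"
proof -
  define c where "c = (y - x) / (z - x)"
  have "c \<noteq> 0" "c * (z - x) = y - x" using assms(1,2) by (simp_all add: c_def)
  have "P y - P x = of_real c * (P z - P x)"
    using isometric_triple_proportional[OF assms] by (simp add: c_def)
  moreover have "of_real (y - x) * w = of_real c * (of_real (z - x) * w)"
    by (metis \<open>c * (z - x) = y - x\<close> mult.assoc of_real_mult)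
  ultimately show ?thesis using \<open>c \<noteq> 0\<close> by (metis mult_cancel_left of_real_eq_0_iff)
qed

text \<open>Knowing the line at two points closer than the isometry radius, the collinearity of
  isometric triples extends it by a step of length h at a time.\<close>

lemma locally_isometric_path_affine:
  fixes P :: "real \<Rightarrow> complex"
  assumes "a \<le> b" "0 < \<delta>"
    and iso: "\<And>u u'. u \<in> {a..b} \<Longrightarrow> u' \<in> {a..b} \<Longrightarrow> \<bar>u - u'\<bar> < \<delta> \<Longrightarrow> cmod (P u - P u') = \<bar>u - u'\<bar>"
  obtains w where "cmod w = 1" "\<And>u. u \<in> {a..b} \<Longrightarrow> P u = P a + of_real (u - a) * w"
proof (cases "a = b")
  case True
  then show ?thesis by (intro that[of 1]) auto
next
  case False
  define h where "h = min (b - a) (\<delta> / 3)"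
  have h: "0 < h" "a + h \<le> b" "2 * h < \<delta>" using False assms(1,2) by (simp_all add: h_def min_def)
  have iso': "cmod (P y - P x) = y - x" if "x \<in> {a..b}" "y \<in> {a..b}" "x \<le> y" "y - x < \<delta>" for x y
    using iso[OF that(2,1)] that(3,4) by simp
  define w where "w = (P (a + h) - P a) / of_real h"
  have Pah: "P (a + h) - P a = of_real (a + h - a) * w" using h(1) by (simp add: w_def)
  have "cmod w = 1" using iso'[of a "a + h"] h by (simp add: w_def norm_divide)
  have line: "P u - P a = of_real (u - a) * w" if "u \<in> {a..b}" "u \<le> a + real k * h" for k u
    using that
  proof (induction k arbitrary: u)
    case 0
    then show ?case by simp
  next
    case (Suc k)
    have "a \<le> u" "0 \<le> real k * h" using Suc.prems(1) h(1) by simp_all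
    then consider "u \<le> a + real k * h" | "a < u" "u \<le> a + h" | "a + h < u" "a + real k * h < u"
      by linarith
    then show ?case
    proof cases
      case 1
      then show ?thesis using Suc.IH Suc.prems(1) by blast
    next
      case 2
      show ?thesis
      proof (cases "u = a + h")
        case False
        then have "a < u" "u < a + h" using 2 by auto
        moreover have d: "cmod (P (a + h) - P a) = a + h - a" "cmod (P u - P a) = u - a"
            "cmod (P (a + h) - P u) = a + h - u"
          using iso' Suc.prems(1) h \<open>a < u\<close> \<open>u < a + h\<close> by auto
        ultimately show ?thesis by (rule isometric_triple_on_line[THEN iffD2, OF _ _ _ _ _ Pah])
      qed (simp only: Pah)
    next
      case 3
      define x where "x = max a (u - 2 * h)"
      define y where "y = u - h"
      have "real (Suc k) * h = real k * h + h" by (simp add: algebra_simps)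
      then have "x \<le> a + real k * h" "y \<le> a + real k * h"
        using Suc.prems(2) h(1) by (auto simp: x_def y_def)
      moreover have xy: "x < y" "y < u" "x \<in> {a..b}" "y \<in> {a..b}" "u - x < \<delta>"
        using 3 h Suc.prems(1) unfolding x_def y_def by auto
      ultimately have Pxy: "P x - P a = of_real (x - a) * w" "P y - P a = of_real (y - a) * w"
        using Suc.IH by blast+
      have "P y - P x = (P y - P a) - (P x - P a)" by simp
      also have "\<dots> = of_real (y - x) * w" unfolding Pxy by (simp add: algebra_simps)
      finally have "P y - P x = of_real (y - x) * w" .
      moreover have d: "cmod (P u - P x) = u - x" "cmod (P y - P x) = y - x" "cmod (P u - P y) = u - y"
        using iso' xy Suc.prems(1) by auto
      ultimately have Pu: "P u - P x = of_real (u - x) * w"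
        using isometric_triple_on_line[OF xy(1,2) d] by blast
      have "P u - P a = (P u - P x) + (P x - P a)" by simp
      also have "\<dots> = of_real (u - a) * w" unfolding Pxy Pu by (simp add: algebra_simps)
      finally show ?thesis .
    qed
  qed
  show ?thesis
  proof (rule that[OF \<open>cmod w = 1\<close>])
    fix u assume "u \<in> {a..b}"
    obtain k :: nat where "(u - a) / h < k" using reals_Archimedean2 by blast
    then have "P u - P a = of_real (u - a) * w"
      using line[OF \<open>u \<in> {a..b}\<close>, of k] h(1) by (simp add: field_simps)
    then show "P u = P a + of_real (u - a) * w" by (metis add.commute diff_eq_eq)
  qed
qed

lemma line_foot_point:
  fixes q w :: complex
  assumes "cmod w = 1"
  obtains m p where "Re (p * cnj w) = 0" "cmod p \<le> cmod q" "\<bar>m\<bar> \<le> cmod q"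
    "\<And>u. q + of_real u * w = p + of_real (u - m) * w"
proof
  define \<mu> where "\<mu> = Re (q * cnj w)"
  have w: "(Re w)\<^sup>2 + (Im w)\<^sup>2 = 1" using assms by (simp add: cmod_def)
  have "Re ((q - of_real \<mu> * w) * cnj w) = \<mu> - \<mu> * ((Re w)\<^sup>2 + (Im w)\<^sup>2)"
    by (simp add: \<mu>_def power2_eq_square algebra_simps)
  then show "Re ((q - of_real \<mu> * w) * cnj w) = 0" using w by simp
  have "(cmod (q - of_real \<mu> * w))\<^sup>2 + \<mu>\<^sup>2 = (Re q - \<mu> * Re w)\<^sup>2 + (Im q - \<mu> * Im w)\<^sup>2 + \<mu>\<^sup>2"
    by (simp add: cmod_power2)
  also have "\<dots> = (Re q)\<^sup>2 + (Im q)\<^sup>2 + \<mu>\<^sup>2 * ((Re w)\<^sup>2 + (Im w)\<^sup>2 - 1)"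
    by (simp add: \<mu>_def power2_eq_square algebra_simps)
  finally have "(cmod q)\<^sup>2 = (cmod (q - of_real \<mu> * w))\<^sup>2 + \<mu>\<^sup>2"
    using w by (simp add: cmod_power2)
  then have "(cmod (q - of_real \<mu> * w))\<^sup>2 \<le> (cmod q)\<^sup>2" "\<bar>-\<mu>\<bar>\<^sup>2 \<le> (cmod q)\<^sup>2" by simp_all
  then show "cmod (q - of_real \<mu> * w) \<le> cmod q" "\<bar>-\<mu>\<bar> \<le> cmod q"
    by (meson norm_ge_zero power2_le_imp_le)+
  show "q + of_real u * w = (q - of_real \<mu> * w) + of_real (u - - \<mu>) * w" for u
    by (simp add: algebra_simps)
qed

lemma line_symmetric_points:
  fixes p w :: complex
  assumes "cmod w = 1" "Re (p * cnj w) = 0"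
  shows "cmod (p + of_real v * w) = sqrt ((cmod p)\<^sup>2 + v\<^sup>2)"
    and "Re ((p + of_real v * w) * cnj (p - of_real v * w)) = (cmod p)\<^sup>2 - v\<^sup>2"
proof -
  have w: "(Re w)\<^sup>2 + (Im w)\<^sup>2 = 1" using assms(1) by (simp add: cmod_def)
  have o: "Re p * Re w + Im p * Im w = 0" using assms(2) by simp
  have "(cmod (p + of_real v * w))\<^sup>2 = (Re p + v * Re w)\<^sup>2 + (Im p + v * Im w)\<^sup>2"
    by (simp add: cmod_power2)
  also have "\<dots> = (Re p)\<^sup>2 + (Im p)\<^sup>2 + 2 * v * (Re p * Re w + Im p * Im w) + v\<^sup>2 * ((Re w)\<^sup>2 + (Im w)\<^sup>2)"
    by (simp add: power2_eq_square algebra_simps)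
  finally have "(cmod (p + of_real v * w))\<^sup>2 = (cmod p)\<^sup>2 + v\<^sup>2" using w o by (simp add: cmod_power2)
  then show "cmod (p + of_real v * w) = sqrt ((cmod p)\<^sup>2 + v\<^sup>2)"
    by (simp add: real_sqrt_unique)
  have "Re ((p + of_real v * w) * cnj (p - of_real v * w))
      = (Re p)\<^sup>2 + (Im p)\<^sup>2 - v\<^sup>2 * ((Re w)\<^sup>2 + (Im w)\<^sup>2)"
    by (simp add: power2_eq_square algebra_simps)
  then show "Re ((p + of_real v * w) * cnj (p - of_real v * w)) = (cmod p)\<^sup>2 - v\<^sup>2"
    using w by (simp add: cmod_power2)
qed

lemma abs_lt_pi_if_cos_gt_minus_one:
  fixes D :: "real \<Rightarrow> real"
  assumes "continuous_on {a..b} D" "\<bar>D a\<bar> < pi" "\<And>v. v \<in> {a..b} \<Longrightarrow> -1 < cos (D v)"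
    and "v \<in> {a..b}"
  shows "\<bar>D v\<bar> < pi"
proof (rule ccontr)
  assume "\<not> \<bar>D v\<bar> < pi"
  moreover have "continuous_on {a..v} (\<lambda>x. \<bar>D x\<bar>)"
    using assms(1,4) by (intro continuous_intros continuous_on_subset[OF assms(1)]) auto
  ultimately obtain x where "a \<le> x" "x \<le> v" "\<bar>D x\<bar> = pi"
    using IVT'[of "\<lambda>x. \<bar>D x\<bar>" a pi v] assms(2,4) by auto
  then have "cos (D x) = -1" by (metis cos_abs_real cos_pi)
  then show False using assms(3)[of x] \<open>a \<le> x\<close> \<open>x \<le> v\<close> assms(4) by simp
qed

text \<open>Seen from the origin, a line at distance d sweeps the angle 2 arctan (V / d) while moving
  from the foot point by V in both directions; the continuous angle is pinned down by its cosine
  since it never reaches pi.\<close>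

lemma polar_angle_swept_by_line:
  fixes A \<rho> :: "real \<Rightarrow> real" and p w :: complex
  assumes A: "continuous_on {m - V..m + V} A"
    and polar: "\<And>u. u \<in> {m - V..m + V} \<Longrightarrow> of_real (\<rho> u) * cis (A u) = p + of_real (u - m) * w"
    and \<rho>: "\<And>u. u \<in> {m - V..m + V} \<Longrightarrow> 0 \<le> \<rho> u"
    and w: "cmod w = 1" "Re (p * cnj w) = 0" and "0 < cmod p"
    and th: "0 < th" "th < pi" and V: "V = cmod p * tan (th / 2)"
  shows "\<bar>A (m + V) - A (m - V)\<bar> = th"
proof -
  define d where "d = cmod p"
  define D where "D v = A (m + v) - A (m - v)" for v
  have "0 < tan (th / 2)" using th by (intro tan_gt_zero) auto
  then have "0 \<le> V" using \<open>0 < cmod p\<close> by (simp add: V)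
  have inside: "m + v \<in> {m - V..m + V}" "m - v \<in> {m - V..m + V}" if "v \<in> {0..V}" for v
    using that by auto
  have P: "of_real (\<rho> (m + v)) * cis (A (m + v)) = p + of_real v * w"
    "of_real (\<rho> (m - v)) * cis (A (m - v)) = p - of_real v * w" if "v \<in> {0..V}" for v
    using polar[OF inside(1)[OF that]] polar[OF inside(2)[OF that]] by simp_all
  have cos_D: "cos (D v) = (d\<^sup>2 - v\<^sup>2) / (d\<^sup>2 + v\<^sup>2)" if v: "v \<in> {0..V}" for v
  proof -
    have "\<rho> (m + v) = sqrt (d\<^sup>2 + v\<^sup>2)" "\<rho> (m - v) = sqrt (d\<^sup>2 + v\<^sup>2)"
      using arg_cong[OF P(1)[OF v], of cmod] arg_cong[OF P(2)[OF v], of cmod] \<rho>[OF inside(1)[OF v]]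
        \<rho>[OF inside(2)[OF v]] line_symmetric_points(1)[OF w, of v] line_symmetric_points(1)[OF w, of "-v"]
      by (simp_all add: norm_mult d_def)
    then have "\<rho> (m + v) * \<rho> (m - v) = d\<^sup>2 + v\<^sup>2" by simp
    moreover have "d\<^sup>2 - v\<^sup>2 = \<rho> (m + v) * \<rho> (m - v) * cos (D v)"
      using line_symmetric_points(2)[OF w, of v]
      unfolding P[OF v, symmetric] by (simp add: d_def D_def cos_diff algebra_simps)
    ultimately show ?thesis using \<open>0 < cmod p\<close> by (simp add: d_def field_simps add_pos_nonneg)
  qed
  have "continuous_on {0..V} D"
    unfolding D_def using inside by (intro continuous_intros continuous_on_compose2[OF A]) auto
  moreover have "-1 < cos (D v)" if "v \<in> {0..V}" for v
  proof -
    have "0 < d\<^sup>2" using \<open>0 < cmod p\<close> by (simp add: d_def)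
    then show ?thesis unfolding cos_D[OF that] by (simp add: less_divide_eq add_pos_nonneg)
  qed
  ultimately have "\<bar>D V\<bar> < pi"
    using \<open>0 \<le> V\<close> by (intro abs_lt_pi_if_cos_gt_minus_one) (auto simp: D_def)
  moreover have "cos \<bar>D V\<bar> = cos th"
  proof -
    have "cos (th / 2) \<noteq> 0" using th by (intro cos_gt_zero_pi[THEN less_imp_neq, symmetric]) auto
    then have "cos th = (1 - (tan (th / 2))\<^sup>2) / (1 + (tan (th / 2))\<^sup>2)"
      using cos_tan_half[of "th / 2"] by simp
    also have "\<dots> = (d\<^sup>2 * (1 - (tan (th / 2))\<^sup>2)) / (d\<^sup>2 * (1 + (tan (th / 2))\<^sup>2))"
      using \<open>0 < cmod p\<close> by (simp add: d_def)
    also have "\<dots> = (d\<^sup>2 - V\<^sup>2) / (d\<^sup>2 + V\<^sup>2)"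
      by (simp add: V d_def power_mult_distrib algebra_simps)
    finally show ?thesis using cos_D \<open>0 \<le> V\<close> by simp
  qed
  ultimately show ?thesis
    using cos_inj_pi[of "\<bar>D V\<bar>" th] th by (simp add: D_def)
qed

text \<open>The angle is reset to 0 at the vertex, as the cone carrier requires.\<close>

definition cone_scale :: "real \<Rightarrow> real \<times> real \<Rightarrow> real \<times> real" where
  "cone_scale m q = (m * fst q, if m * fst q = 0 then 0 else snd q)"

lemma cone_scale_mem:
  assumes "q \<in> {q \<in> cone_carrier th. fst q < r}" "0 \<le> m" "m \<le> 1"
  shows "cone_scale m q \<in> {q \<in> cone_carrier th. fst q < r}"
proof -
  have q: "0 \<le> fst q" "0 \<le> snd q" "snd q < th" "fst q < r"
    using assms(1) unfolding cone_carrier_def by auto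
  have "m * fst q \<le> fst q" using q(1) assms(2,3) by (simp add: mult_left_le_one_le)
  then show ?thesis unfolding cone_carrier_def cone_scale_def using q assms(2) by auto
qed

lemma cone_scale_one: "q \<in> cone_carrier th \<Longrightarrow> cone_scale 1 q = q"
  unfolding cone_carrier_def cone_scale_def by (cases q) auto

lemma cone_scale_zero: "cone_scale 0 q = cone_vertex"
  by (simp add: cone_scale_def cone_vertex_def)

lemma scaled_law_of_cosines_le:
  fixes \<rho> \<rho>' m m' c r :: real
  assumes "0 \<le> \<rho>" "\<rho> \<le> r" "0 \<le> \<rho>'" "0 \<le> m" "m \<le> 1" "0 \<le> m'" "m' \<le> 1" "c \<le> 1"
  shows "sqrt ((m * \<rho> - m' * \<rho>')\<^sup>2 + 2 * (m * \<rho> * (m' * \<rho>')) * (1 - c))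
    \<le> \<bar>m - m'\<bar> * r + 2 * sqrt ((\<rho> - \<rho>')\<^sup>2 + 2 * (\<rho> * \<rho>') * (1 - c))"
proof -
  define D where "D = sqrt ((\<rho> - \<rho>')\<^sup>2 + 2 * (\<rho> * \<rho>') * (1 - c))"
  have D2: "D\<^sup>2 = (\<rho> - \<rho>')\<^sup>2 + 2 * (\<rho> * \<rho>') * (1 - c)" and "0 \<le> D"
    using assms by (simp_all add: D_def)
  have "m * \<rho> * (m' * \<rho>') \<le> \<rho> * \<rho>'"
    using assms by (intro mult_mono) (auto simp: mult_left_le_one_le)
  then have "2 * (m * \<rho> * (m' * \<rho>')) * (1 - c) \<le> 2 * (\<rho> * \<rho>') * (1 - c)"
    using assms(8) by (intro mult_right_mono) auto
  then have "2 * (m * \<rho> * (m' * \<rho>')) * (1 - c) \<le> D\<^sup>2"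
    unfolding D2 using zero_le_power2[of "\<rho> - \<rho>'"] by linarith
  then have "sqrt ((m * \<rho> - m' * \<rho>')\<^sup>2 + 2 * (m * \<rho> * (m' * \<rho>')) * (1 - c))
      \<le> sqrt ((m * \<rho> - m' * \<rho>')\<^sup>2 + D\<^sup>2)"
    by (intro real_sqrt_le_mono add_left_mono)
  also have "\<dots> \<le> \<bar>m * \<rho> - m' * \<rho>'\<bar> + D"
    using sqrt_add_le_add_sqrt[of "(m * \<rho> - m' * \<rho>')\<^sup>2" "D\<^sup>2"] \<open>0 \<le> D\<close> by simp
  also have "\<bar>m * \<rho> - m' * \<rho>'\<bar> \<le> \<bar>m - m'\<bar> * r + \<bar>\<rho> - \<rho>'\<bar>"
  proof -
    have "m * \<rho> - m' * \<rho>' = (m - m') * \<rho> + m' * (\<rho> - \<rho>')" by (simp add: algebra_simps)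
    then have "\<bar>m * \<rho> - m' * \<rho>'\<bar> \<le> \<bar>m - m'\<bar> * \<rho> + m' * \<bar>\<rho> - \<rho>'\<bar>"
      using assms(1,6) by (metis abs_mult abs_of_nonneg abs_triangle_ineq)
    moreover have "\<bar>m - m'\<bar> * \<rho> \<le> \<bar>m - m'\<bar> * r" using assms(2) by (intro mult_left_mono) auto
    moreover have "m' * \<bar>\<rho> - \<rho>'\<bar> \<le> \<bar>\<rho> - \<rho>'\<bar>" using assms(6,7) by (simp add: mult_left_le_one_le)
    ultimately show ?thesis by linarith
  qed
  also have "\<bar>\<rho> - \<rho>'\<bar> \<le> D"
    using assms(1,3,8) unfolding D_def by (metis real_sqrt_abs real_sqrt_le_mono le_add_same_cancel1
      zero_le_mult_iff mult_nonneg_nonneg diff_ge_0_iff_ge zero_le_numeral)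
  finally show ?thesis by (simp add: D_def)
qed

lemma cone_dist_law_of_cosines':
  assumes "th < pi" "0 \<le> t1" "t1 < th" "0 \<le> t2" "t2 < th"
  shows "cone_dist th (r1, t1) (r2, t2)
    = sqrt ((r1 - r2)\<^sup>2 + 2 * (r1 * r2) * (1 - cos (cone_angdist th t1 t2)))"
  unfolding cone_dist_law_of_cosines[OF assms] by (simp add: power2_eq_square algebra_simps)

lemma cone_dist_cone_scale_le:
  assumes "th < pi" "q \<in> cone_carrier th" "q' \<in> cone_carrier th" "fst q \<le> r"
    and "0 \<le> m" "m \<le> 1" "0 \<le> m'" "m' \<le> 1"
  shows "cone_dist th (cone_scale m q) (cone_scale m' q') \<le> \<bar>m - m'\<bar> * r + 2 * cone_dist th q q'"
proof -
  obtain \<rho> t \<rho>' t' where qq: "q = (\<rho>, t)" "q' = (\<rho>', t')" by fastforce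
  have b: "0 \<le> \<rho>" "0 \<le> t" "t < th" "\<rho> \<le> r" "0 \<le> \<rho>'" "0 \<le> t'" "t' < th"
    using assms(2-4) unfolding qq cone_carrier_def by auto
  define c where "c = cos (cone_angdist th t t')"
  define t1 where "t1 = (if m * \<rho> = 0 then 0 else t)"
  define t1' where "t1' = (if m' * \<rho>' = 0 then 0 else t')"
  have scaled: "cone_scale m q = (m * \<rho>, t1)" "cone_scale m' q' = (m' * \<rho>', t1')"
    by (simp_all add: cone_scale_def qq t1_def t1'_def)
  have "cone_dist th (cone_scale m q) (cone_scale m' q')
      = sqrt ((m * \<rho> - m' * \<rho>')\<^sup>2 + 2 * (m * \<rho> * (m' * \<rho>')) * (1 - c))"
  proof (cases "m * \<rho> = 0 \<or> m' * \<rho>' = 0")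
    case True
    then show ?thesis
      unfolding scaled using cone_dist_law_of_cosines'[OF assms(1), of t1 t1'] b
      by (auto simp: t1_def t1'_def)
  next
    case False
    then show ?thesis
      unfolding scaled using cone_dist_law_of_cosines'[OF assms(1), of t t'] b
      by (simp add: t1_def t1'_def c_def)
  qed
  also have "\<dots> \<le> \<bar>m - m'\<bar> * r + 2 * cone_dist th q q'"
    unfolding qq cone_dist_law_of_cosines'[OF assms(1) b(2,3,6,7)] c_def[symmetric]
    using b assms(5-8) by (intro scaled_law_of_cosines_le) (auto simp: c_def)
  finally show ?thesis .
qed

locale acute_cone_chart =
  fixes th :: real and U :: "'a::metric_space set" and f :: "'a \<Rightarrow> real \<times> real"
    and r :: real and s :: 'a and e :: real
  assumes angle: "0 < th" "th < pi"
    and centre: "s \<in> U" "f s = cone_vertex"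
    and image: "f ` U = {q \<in> cone_carrier th. fst q < r}"
    and isometric: "\<And>x y. x \<in> U \<Longrightarrow> y \<in> U \<Longrightarrow> cone_dist th (f x) (f y) = dist x y"
    and ball: "0 < e" "ball s e \<subseteq> U"
begin

lemma chart_coordinates:
  assumes "x \<in> U"
  shows "0 \<le> fst (f x)" "fst (f x) < r" "0 \<le> snd (f x)" "snd (f x) < th"
proof -
  have "f x \<in> f ` U" using assms by blast
  then show "0 \<le> fst (f x)" "fst (f x) < r" "0 \<le> snd (f x)" "snd (f x) < th"
    unfolding image cone_carrier_def by auto
qed

lemma fst_chart:
  assumes "x \<in> U"
  shows "fst (f x) = dist x s"
proof -
  obtain a b where ab: "f x = (a, b)" by fastforce
  have "dist x s = cone_dist th (a, b) (0, 0)"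
    using isometric[OF assms centre(1)] centre(2) ab by (simp add: cone_vertex_def)
  also have "\<dots> = a"
    using cone_dist_law_of_cosines[of th b 0 a 0] chart_coordinates[OF assms] ab angle by simp
  finally show ?thesis using ab by simp
qed

lemma chart_inj: "inj_on f U"
proof (rule inj_onI)
  fix x y assume "x \<in> U" "y \<in> U" "f x = f y"
  moreover obtain a b where ab: "f x = (a, b)" by fastforce
  ultimately have "dist x y = cone_dist th (a, b) (a, b)" using isometric by metis
  also have "\<dots> = 0"
    using cone_dist_law_of_cosines[of th b b a a] chart_coordinates[OF \<open>x \<in> U\<close>] ab angle
    by (simp add: cone_angdist_def power2_eq_square)
  finally show "x = y" by simp
qed

lemma dist_law_of_cosines:
  assumes "x \<in> U" "y \<in> U"
  shows "dist x y = sqrt ((dist x s)\<^sup>2 + (dist y s)\<^sup>2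
    - 2 * dist x s * dist y s * cos (cone_angdist th (snd (f x)) (snd (f y))))"
proof -
  have "f x = (dist x s, snd (f x))" "f y = (dist y s, snd (f y))"
    using fst_chart assms by (metis prod.collapse)+
  then show ?thesis
    using isometric[OF assms] cone_dist_law_of_cosines[of th "snd (f x)" "snd (f y)" "dist x s" "dist y s"]
      chart_coordinates[OF assms(1)] chart_coordinates[OF assms(2)] angle by metis
qed

lemma cos_angle_pos:
  assumes "x \<in> U" "y \<in> U"
  shows "0 < cos (cone_angdist th (snd (f x)) (snd (f y)))"
  using cone_angdist_bounds[OF chart_coordinates(3,4)[OF assms(1)] chart_coordinates(3,4)[OF assms(2)]] angle
  by (intro cos_gt_zero_pi) auto

lemma cos_angle_eq:
  assumes "x \<in> U" "y \<in> U" "x \<noteq> s" "y \<noteq> s"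
  shows "cos (cone_angdist th (snd (f x)) (snd (f y)))
    = ((dist x s)\<^sup>2 + (dist y s)\<^sup>2 - (dist x y)\<^sup>2) / (2 * dist x s * dist y s)"
proof -
  define c where "c = cos (cone_angdist th (snd (f x)) (snd (f y)))"
  have "0 \<le> (dist x s)\<^sup>2 + (dist y s)\<^sup>2 - 2 * dist x s * dist y s * c"
    by (rule law_of_cosines_nonneg) (auto simp: c_def)
  then have "(dist x y)\<^sup>2 = (dist x s)\<^sup>2 + (dist y s)\<^sup>2 - 2 * dist x s * dist y s * c"
    using dist_law_of_cosines[OF assms(1,2)] by (simp add: c_def)
  then show ?thesis using assms(3,4) unfolding c_def[symmetric] by (simp add: field_simps)
qed

lemma angle_eq_arccos:
  assumes "x \<in> U" "y \<in> U" "x \<noteq> s" "y \<noteq> s"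
  shows "cone_angdist th (snd (f x)) (snd (f y))
    = arccos (((dist x s)\<^sup>2 + (dist y s)\<^sup>2 - (dist x y)\<^sup>2) / (2 * dist x s * dist y s))"
proof -
  have "0 \<le> cone_angdist th (snd (f x)) (snd (f y))" "cone_angdist th (snd (f x)) (snd (f y)) \<le> pi"
    using cone_angdist_bounds[OF chart_coordinates(3,4)[OF assms(1)] chart_coordinates(3,4)[OF assms(2)]] angle
    by auto
  then show ?thesis using cos_angle_eq[OF assms] arccos_cos by metis
qed

lemma eq_if_same_radius_and_congruent_angle:
  assumes "x \<in> U" "y \<in> U" "dist x s = dist y s" "snd (f x) - snd (f y) = of_int j * th"
  shows "x = y"
proof -
  have "\<bar>of_int j * th\<bar> < 1 * th"
    using assms(4) chart_coordinates(3,4)[OF assms(1)] chart_coordinates(3,4)[OF assms(2)] by auto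
  then have "\<bar>real_of_int j\<bar> < 1" using angle(1) by (simp add: abs_mult)
  then have "j = 0" by linarith
  then have "snd (f x) = snd (f y)" using assms(4) by simp
  moreover have "fst (f x) = fst (f y)" using fst_chart assms(1-3) by simp
  ultimately show ?thesis using chart_inj assms(1,2) by (metis inj_on_eq_iff prod.expand)
qed

lemma radial_contraction_lipschitz:
  fixes p :: "real \<Rightarrow> 'a"
  assumes pU: "\<And>x. x \<in> {0..1} \<Longrightarrow> p x \<in> U" and lip: "L-lipschitz_on {0..1} p"
  shows "(r + 2 * L)-lipschitz_on ({0..1} \<times> {0..1})
    (\<lambda>z. inv_into U f (cone_scale (1 - fst z) (f (p (snd z)))))" (is "_-lipschitz_on _ ?h")
proof (rule lipschitz_onI)
  have "0 \<le> L" using lip by (rule lipschitz_on_nonneg)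
  moreover have "0 \<le> r" using chart_coordinates(1,2)[OF centre(1)] by linarith
  ultimately show "0 \<le> r + 2 * L" by simp
  have fh: "f (?h z) = cone_scale (1 - fst z) (f (p (snd z)))" "?h z \<in> U"
    if "z \<in> {0..1} \<times> {0..1}" for z :: "real \<times> real"
  proof -
    have "cone_scale (1 - fst z) (f (p (snd z))) \<in> f ` U"
      unfolding image using that pU by (intro cone_scale_mem) (auto simp flip: image)
    then show "f (?h z) = cone_scale (1 - fst z) (f (p (snd z)))" "?h z \<in> U"
      by (auto intro: inv_into_into f_inv_into_f)
  qed
  fix z z' :: "real \<times> real" assume z: "z \<in> {0..1} \<times> {0..1}" "z' \<in> {0..1} \<times> {0..1}"
  have fp: "f (p (snd z)) \<in> cone_carrier th" "f (p (snd z')) \<in> cone_carrier th" "fst (f (p (snd z))) \<le> r"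
    using image pU z chart_coordinates(2)[of "p (snd z)"] by (auto simp: less_imp_le)
  have "\<bar>(1 - fst z) - (1 - fst z')\<bar> \<le> dist z z'" "dist (snd z) (snd z') \<le> dist z z'"
    using dist_fst_le[of z z'] dist_snd_le[of z z'] by (simp_all add: dist_real_def abs_minus_commute)
  then have "\<bar>(1 - fst z) - (1 - fst z')\<bar> * r \<le> dist z z' * r" "L * dist (snd z) (snd z') \<le> L * dist z z'"
    using \<open>0 \<le> r\<close> \<open>0 \<le> L\<close> by (auto intro: mult_right_mono mult_left_mono)
  moreover have "(r + 2 * L) * dist z z' = dist z z' * r + 2 * (L * dist z z')"
    by (simp add: algebra_simps)
  ultimately have bound: "\<bar>(1 - fst z) - (1 - fst z')\<bar> * r + 2 * (L * dist (snd z) (snd z'))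
      \<le> (r + 2 * L) * dist z z'"
    by linarith
  have "dist (?h z) (?h z') = cone_dist th (f (?h z)) (f (?h z'))"
    using isometric[OF fh(2)[OF z(1)] fh(2)[OF z(2)]] by simp
  also have "\<dots> \<le> \<bar>(1 - fst z) - (1 - fst z')\<bar> * r + 2 * cone_dist th (f (p (snd z))) (f (p (snd z')))"
    unfolding fh(1)[OF z(1)] fh(1)[OF z(2)] using z by (intro cone_dist_cone_scale_le[OF angle(2) fp]) auto
  also have "cone_dist th (f (p (snd z))) (f (p (snd z'))) \<le> L * dist (snd z) (snd z')"
    using isometric pU z lipschitz_onD[OF lip] by auto
  also note bound
  finally show "dist (?h z) (?h z') \<le> (r + 2 * L) * dist z z'" by simp
qed

lemma loop_nullhomotopic:
  assumes pU: "\<And>x. x \<in> {0..1} \<Longrightarrow> p x \<in> U" and lip: "L-lipschitz_on {0..1} p" and loop: "p 1 = p 0"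
  shows "homotopic_loops UNIV p (\<lambda>u. s)"
proof -
  define h where "h = (\<lambda>z. inv_into U f (cone_scale (1 - fst z) (f (p (snd z)))))"
  have "continuous_on ({0..1} \<times> {0..1}) h"
    unfolding h_def by (rule lipschitz_on_continuous_on[OF radial_contraction_lipschitz[OF pU lip]])
  moreover have "h (0, x) = p x" if "x \<in> {0..1}" for x
  proof -
    have "f (p x) \<in> cone_carrier th" using pU[OF that] image by auto
    then show ?thesis using cone_scale_one pU[OF that] chart_inj unfolding h_def by simp
  qed
  moreover have "h (1, x) = s" for x
    using inv_into_f_f[OF chart_inj centre(1)] by (simp add: h_def cone_scale_zero centre(2))
  ultimately show ?thesis
    unfolding homotopic_loops by (intro exI[of _ h]) (simp add: pathfinish_def pathstart_def h_def loop)
qed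

end

locale acute_cone_chart_curve = acute_cone_chart th U f r s e
  for th and U :: "'a::metric_space set" and f r s e +
  fixes g :: "real \<Rightarrow> 'a"
  assumes local_isometric: "local_isometric g"
begin

text \<open>At the vertex the two half-curves would leave s in directions at cone angle at most
  th/2 < pi/2 apart, which contradicts the fact that g is distance preserving through s.\<close>

lemma curve_avoids_vertex: "g u \<noteq> s"
proof
  assume gu: "g u = s"
  obtain \<epsilon> where \<epsilon>: "0 < \<epsilon>" "\<And>a b. a \<in> ball u \<epsilon> \<Longrightarrow> b \<in> ball u \<epsilon> \<Longrightarrow> dist (g a) (g b) = dist a b"
    using local_isometric unfolding local_isometric_def by blast
  define \<eta> where "\<eta> = min \<epsilon> e / 2"
  have \<eta>: "0 < \<eta>" "\<eta> < \<epsilon>" "\<eta> < e" using \<epsilon>(1) ball(1) by (auto simp: \<eta>_def)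
  have in_ball: "u - \<eta> \<in> ball u \<epsilon>" "u + \<eta> \<in> ball u \<epsilon>" "u \<in> ball u \<epsilon>"
    using \<eta> \<epsilon> by (auto simp: dist_real_def)
  have d: "dist (g (u - \<eta>)) s = \<eta>" "dist (g (u + \<eta>)) s = \<eta>" "dist (g (u - \<eta>)) (g (u + \<eta>)) = 2 * \<eta>"
    using \<epsilon>(2)[OF in_ball(1) in_ball(3)] \<epsilon>(2)[OF in_ball(2) in_ball(3)] \<epsilon>(2)[OF in_ball(1) in_ball(2)] gu \<eta>(1)
    by (simp_all add: dist_real_def)
  have U: "g (u - \<eta>) \<in> U" "g (u + \<eta>) \<in> U" using d(1,2) \<eta>(3) ball(2) by (auto simp: dist_commute)
  define c where "c = cos (cone_angdist th (snd (f (g (u - \<eta>)))) (snd (f (g (u + \<eta>)))))"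
  have "0 < c" unfolding c_def by (rule cos_angle_pos[OF U])
  have "2 * \<eta> = sqrt (\<eta>\<^sup>2 + \<eta>\<^sup>2 - 2 * \<eta> * \<eta> * c)"
    using dist_law_of_cosines[OF U] d by (simp add: c_def)
  then have "(2 * \<eta>)\<^sup>2 = \<eta>\<^sup>2 + \<eta>\<^sup>2 - 2 * \<eta> * \<eta> * c"
    using \<eta>(1) by (metis real_sqrt_gt_0_iff real_sqrt_pow2 less_le zero_less_mult_iff zero_less_numeral)
  then have "\<eta> * \<eta> * (1 + c) = 0" by (simp add: power2_eq_square algebra_simps)
  then show False using \<eta>(1) \<open>0 < c\<close> by simp
qed

lemma curve_near_vertex:
  assumes "dist (g u) s < e"
  shows "g u \<in> U" "0 < dist (g u) s" "0 \<le> snd (f (g u))" "snd (f (g u)) < th"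
proof -
  show "g u \<in> U" using assms ball(2) by (auto simp: dist_commute)
  then show "0 \<le> snd (f (g u))" "snd (f (g u)) < th" by (auto dest: chart_coordinates)
  show "0 < dist (g u) s" using curve_avoids_vertex[of u] by simp
qed

lemma angular_coordinate_continuous:
  assumes near: "\<forall>u\<in>{a..b}. dist (g u) s < e"
  shows "continuous_on {a..b} (\<lambda>u. cis (2 * pi * snd (f (g u)) / th))"
  unfolding continuous_on_def
proof
  fix u assume u: "u \<in> {a..b}"
  define Z where "Z = (\<lambda>u. cis (2 * pi * snd (f (g u)) / th))"
  define F where "F = (\<lambda>v. ((dist (g u) s)\<^sup>2 + (dist (g v) s)\<^sup>2 - (dist (g u) (g v))\<^sup>2)
    / (2 * dist (g u) s * dist (g v) s))"
  have near': "g v \<in> U" "0 < dist (g v) s" "g v \<noteq> s" if "v \<in> {a..b}" for v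
    using curve_near_vertex near that by auto
  have "continuous_on {a..b} g"
    by (rule lipschitz_on_continuous_on[OF local_isometric_lipschitz[OF local_isometric]])
  then have "continuous_on {a..b} F"
    unfolding F_def using near'(2) u by (intro continuous_intros) auto
  moreover have "\<forall>v\<in>{a..b}. -1 \<le> F v \<and> F v \<le> 1"
    using cos_angle_eq near' u unfolding F_def by (metis cos_ge_minus_one cos_le_one)
  ultimately have "continuous_on {a..b} (\<lambda>v. arccos (F v))" by (rule continuous_on_arccos)
  moreover have "F u = 1" using near'(2)[OF u] unfolding F_def by (simp add: power2_eq_square)
  ultimately have "((\<lambda>v. arccos (F v)) \<longlongrightarrow> 0) (at u within {a..b})"
    using u unfolding continuous_on_def by (metis arccos_1)
  then have "((\<lambda>v. 2 * pi / th * arccos (F v)) \<longlongrightarrow> 0) (at u within {a..b})"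
    by (rule tendsto_mult_right_zero)
  moreover have "\<forall>\<^sub>F v in at u within {a..b}. norm (Z v - Z u) \<le> 2 * pi / th * arccos (F v)"
  proof -
    have "norm (Z v - Z u) \<le> 2 * pi / th * arccos (F v)" if v: "v \<in> {a..b}" for v
    proof -
      have "norm (Z v - Z u) \<le> 2 * pi / th * cone_angdist th (snd (f (g v))) (snd (f (g u)))"
        unfolding Z_def using norm_cis_diff_le_cone_angdist angle(1) curve_near_vertex near u v by auto
      also have "\<dots> = 2 * pi / th * arccos (F v)"
        using angle_eq_arccos near' u v cone_angdist_commute unfolding F_def by metis
      finally show ?thesis .
    qed
    then show ?thesis unfolding eventually_at_filter by (intro always_eventually) auto
  qed
  ultimately have "((\<lambda>v. Z v - Z u) \<longlongrightarrow> 0) (at u within {a..b})" by (rule Lim_null_comparison[rotated])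
  then show "(Z \<longlongrightarrow> Z u) (at u within {a..b})" by (simp add: LIM_zero_iff)
qed

lemma angular_coordinate_lift:
  assumes "\<forall>u\<in>{a..b}. dist (g u) s < e"
  obtains A where "continuous_on {a..b} A"
    "\<And>u. u \<in> {a..b} \<Longrightarrow> \<exists>k::int. snd (f (g u)) = A u + of_int k * th"
proof -
  have "contractible {a..b}" by (rule convex_imp_contractible) (rule convex_real_interval)
  then obtain L where L: "continuous_on {a..b} L"
    "\<And>u. u \<in> {a..b} \<Longrightarrow> cis (2 * pi * snd (f (g u)) / th) = exp (L u)"
    using continuous_logarithm_on_contractible[OF angular_coordinate_continuous[OF assms]]
    by (metis cis_neq_zero)
  show ?thesis
  proof (rule that[of "\<lambda>u. th / (2 * pi) * Im (L u)"])
    show "continuous_on {a..b} (\<lambda>u. th / (2 * pi) * Im (L u))" by (intro continuous_intros L(1))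
    fix u assume u: "u \<in> {a..b}"
    have "exp (L u) = exp (\<i> * complex_of_real (2 * pi * snd (f (g u)) / th))"
      using L(2)[OF u] by (simp add: cis_conv_exp)
    then obtain n :: int
      where "L u = \<i> * complex_of_real (2 * pi * snd (f (g u)) / th) + of_int (2 * n) * pi * \<i>"
      unfolding exp_eq by blast
    then have "Im (L u) = 2 * pi * snd (f (g u)) / th + 2 * of_int n * pi" by simp
    then have "th / (2 * pi) * Im (L u) = snd (f (g u)) + of_int n * th"
      using angle(1) by (simp add: field_simps)
    then show "\<exists>k::int. snd (f (g u)) = th / (2 * pi) * Im (L u) + of_int k * th"
      by (intro exI[of _ "-n"]) simp
  qed
qed

lemma development_locally_isometric:
  assumes near: "\<forall>u\<in>{a..b}. dist (g u) s < e"
    and A: "continuous_on {a..b} A" "\<And>u. u \<in> {a..b} \<Longrightarrow> \<exists>k::int. snd (f (g u)) = A u + of_int k * th"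
  obtains \<delta> where "0 < \<delta>" "\<And>u u'. u \<in> {a..b} \<Longrightarrow> u' \<in> {a..b} \<Longrightarrow> \<bar>u - u'\<bar> < \<delta> \<Longrightarrow>
    cmod (of_real (dist (g u) s) * cis (A u) - of_real (dist (g u') s) * cis (A u')) = \<bar>u - u'\<bar>"
proof -
  have "uniformly_continuous_on {a..b} A" by (rule compact_uniformly_continuous[OF A(1)]) simp
  then obtain \<delta>1 where \<delta>1: "0 < \<delta>1"
    "\<And>x x'. x \<in> {a..b} \<Longrightarrow> x' \<in> {a..b} \<Longrightarrow> dist x' x < \<delta>1 \<Longrightarrow> dist (A x') (A x) < th / 2"
    unfolding uniformly_continuous_on_def using angle(1) by (metis half_gt_zero)
  obtain \<delta>0 where \<delta>0: "0 < \<delta>0"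
    "\<And>u u'. u \<in> {a..b} \<Longrightarrow> \<bar>u - u'\<bar> < \<delta>0 \<Longrightarrow> dist (g u) (g u') = \<bar>u - u'\<bar>"
    using local_isometric_uniformly[OF local_isometric, of "{a..b}"] by auto
  show ?thesis
  proof (rule that[of "min \<delta>0 \<delta>1"])
    show "0 < min \<delta>0 \<delta>1" using \<delta>0(1) \<delta>1(1) by simp
    fix u u' assume u: "u \<in> {a..b}" "u' \<in> {a..b}" "\<bar>u - u'\<bar> < min \<delta>0 \<delta>1"
    note cu = curve_near_vertex[of u] and cu' = curve_near_vertex[of u']
    have W: "dist (g u) s < e" "dist (g u') s < e" using near u by auto
    obtain k k' where "snd (f (g u)) = A u + of_int k * th" "snd (f (g u')) = A u' + of_int k' * th"
      using A(2) u by blast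
    moreover have "\<bar>A u - A u'\<bar> < th / 2" using \<delta>1(2)[of u' u] u by (simp add: dist_real_def)
    ultimately have "cone_angdist th (snd (f (g u))) (snd (f (g u'))) = \<bar>A u - A u'\<bar>"
      using cone_angdist_of_lift[OF angle(1) cu(3,4)[OF W(1)] cu'(3,4)[OF W(2)]] by simp
    then have "cos (A u - A u') = cos (cone_angdist th (snd (f (g u))) (snd (f (g u'))))"
      by (metis cos_abs_real)
    moreover have "0 \<le> (dist (g u) s)\<^sup>2 + (dist (g u') s)\<^sup>2
        - 2 * dist (g u) s * dist (g u') s * cos (cone_angdist th (snd (f (g u))) (snd (f (g u'))))"
      by (rule law_of_cosines_nonneg) simp_all
    ultimately have "(cmod (of_real (dist (g u) s) * cis (A u) - of_real (dist (g u') s) * cis (A u')))\<^sup>2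
        = (dist (g u) (g u'))\<^sup>2"
      unfolding norm_polar_diff_squared dist_law_of_cosines[OF cu(1)[OF W(1)] cu'(1)[OF W(2)]]
      by simp
    also have "\<dots> = \<bar>u - u'\<bar>\<^sup>2" using \<delta>0(2)[OF u(1)] u(3) by simp
    finally show "cmod (of_real (dist (g u) s) * cis (A u) - of_real (dist (g u') s) * cis (A u')) = \<bar>u - u'\<bar>"
      by (rule power2_eq_imp_eq) auto
  qed
qed

lemma development_affine:
  assumes "t0 \<in> {a..b}" "\<forall>u\<in>{a..b}. dist (g u) s < e"
  obtains A w where "continuous_on {a..b} A"
    "\<And>u. u \<in> {a..b} \<Longrightarrow> \<exists>k::int. snd (f (g u)) = A u + of_int k * th" "cmod w = 1"
    "\<And>u. u \<in> {a..b} \<Longrightarrow>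
      of_real (dist (g u) s) * cis (A u) = of_real (dist (g t0) s) * cis (A t0) + of_real (u - t0) * w"
proof -
  define P where "P A u = of_real (dist (g u) s) * cis (A u)" for A u
  obtain A where A: "continuous_on {a..b} A" "\<And>u. u \<in> {a..b} \<Longrightarrow> \<exists>k::int. snd (f (g u)) = A u + of_int k * th"
    using angular_coordinate_lift[OF assms(2)] by blast
  obtain \<delta> where "0 < \<delta>" "\<And>u u'. u \<in> {a..b} \<Longrightarrow> u' \<in> {a..b} \<Longrightarrow> \<bar>u - u'\<bar> < \<delta> \<Longrightarrow>
    cmod (P A u - P A u') = \<bar>u - u'\<bar>"
    using development_locally_isometric[OF assms(2) A] unfolding P_def by blast
  moreover have "a \<le> b" using assms(1) by simp
  ultimately obtain w where "cmod w = 1" and affine: "\<And>u. u \<in> {a..b} \<Longrightarrow> P A u = P A a + of_real (u - a) * w"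
    using locally_isometric_path_affine by metis
  moreover have "P A u = P A t0 + of_real (u - t0) * w" if "u \<in> {a..b}" for u
  proof -
    have "P A u - P A t0 = (P A u - P A a) - (P A t0 - P A a)" by simp
    also have "\<dots> = of_real (u - t0) * w"
      unfolding affine[OF that] affine[OF assms(1)] by (simp add: algebra_simps)
    finally show ?thesis by (metis add.commute diff_eq_eq)
  qed
  ultimately show ?thesis using that[OF A] unfolding P_def by blast
qed

lemma segment_loop_nullhomotopic:
  assumes "t1 \<le> t2" "g t1 = g t2" "\<And>u. u \<in> {t1..t2} \<Longrightarrow> dist (g u) s < e"
  shows "homotopic_loops UNIV (g \<circ> (\<lambda>u. t1 + u * (t2 - t1))) (\<lambda>u. s)"
proof (rule loop_nullhomotopic)
  fix x :: real assume "x \<in> {0..1}"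
  then have "t1 + x * (t2 - t1) \<in> {t1..t2}"
    using assms(1) mult_left_le_one_le[of "t2 - t1" x] by auto
  then show "(g \<circ> (\<lambda>u. t1 + u * (t2 - t1))) x \<in> U" using curve_near_vertex(1) assms(3) by auto
next
  show "(t2 - t1)-lipschitz_on {0..1} (g \<circ> (\<lambda>u. t1 + u * (t2 - t1)))"
  proof (rule lipschitz_onI)
    fix x y :: real
    have "(t1 + x * (t2 - t1)) - (t1 + y * (t2 - t1)) = (x - y) * (t2 - t1)" by (simp add: algebra_simps)
    then have "dist (g (t1 + x * (t2 - t1))) (g (t1 + y * (t2 - t1))) \<le> \<bar>(x - y) * (t2 - t1)\<bar>"
      using local_isometric_dist_le[OF local_isometric] by metis
    then show "dist ((g \<circ> (\<lambda>u. t1 + u * (t2 - t1))) x) ((g \<circ> (\<lambda>u. t1 + u * (t2 - t1))) y)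
        \<le> (t2 - t1) * dist x y"
      using assms(1) by (simp add: abs_mult dist_real_def mult.commute)
  qed (use assms(1) in simp)
next
  show "(g \<circ> (\<lambda>u. t1 + u * (t2 - t1))) 1 = (g \<circ> (\<lambda>u. t1 + u * (t2 - t1))) 0"
    using assms(2) by simp
qed

lemma symmetric_times_coincide:
  assumes A: "continuous_on {m - V..m + V} A"
      "\<And>u. u \<in> {m - V..m + V} \<Longrightarrow> \<exists>k::int. snd (f (g u)) = A u + of_int k * th"
    and near: "\<And>u. u \<in> {m - V..m + V} \<Longrightarrow> dist (g u) s < e"
    and line: "\<And>u. u \<in> {m - V..m + V} \<Longrightarrow> of_real (dist (g u) s) * cis (A u) = p + of_real (u - m) * w"
    and w: "cmod w = 1" "Re (p * cnj w) = 0" and "0 < cmod p" and V: "V = cmod p * tan (th / 2)"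
  shows "g (m - V) = g (m + V)"
proof -
  have "0 < tan (th / 2)" using angle by (intro tan_gt_zero) auto
  then have ends: "m + V \<in> {m - V..m + V}" "m - V \<in> {m - V..m + V}"
    using \<open>0 < cmod p\<close> by (simp_all add: V)
  have "\<bar>A (m + V) - A (m - V)\<bar> = th"
    using polar_angle_swept_by_line[OF A(1) line _ w \<open>0 < cmod p\<close> angle V] by simp
  then have "A (m + V) - A (m - V) = of_int 1 * th \<or> A (m + V) - A (m - V) = of_int (-1) * th" by auto
  then obtain \<sigma> :: int where swept: "A (m + V) - A (m - V) = of_int \<sigma> * th" by blast
  obtain k k' where "snd (f (g (m + V))) = A (m + V) + of_int k * th"
      "snd (f (g (m - V))) = A (m - V) + of_int k' * th"
    using A(2) ends by blast
  then have "snd (f (g (m + V))) - snd (f (g (m - V))) = (A (m + V) - A (m - V)) + of_int (k - k') * th"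
    by (simp add: algebra_simps)
  also have "\<dots> = of_int (\<sigma> + (k - k')) * th" unfolding swept by (simp add: algebra_simps)
  finally have "snd (f (g (m + V))) - snd (f (g (m - V))) = of_int (\<sigma> + (k - k')) * th" .
  moreover have "g (m + V) \<in> U" "g (m - V) \<in> U" using curve_near_vertex(1) near ends by auto
  moreover have "dist (g (m + V)) s = dist (g (m - V)) s"
    using arg_cong[OF line[OF ends(1)], of cmod] arg_cong[OF line[OF ends(2)], of cmod]
      line_symmetric_points(1)[OF w, of V] line_symmetric_points(1)[OF w, of "-V"]
    by (simp add: norm_mult)
  ultimately show ?thesis by (metis eq_if_same_radius_and_congruent_angle)
qed

text \<open>The time window of radius R about t0 stays in the ball of radius e = C + R about s; the
  foot point m lies within C of t0 and V < C tan (th / 2), so [m - V, m + V] fits in the window.\<close>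

lemma nullhomotopic_self_intersection_near_vertex:
  assumes close: "dist (g t0) s < e / (2 + tan (th / 2))"
  obtains t1 t2 where "t1 < t2" "g t1 = g t2"
    "homotopic_loops UNIV (g \<circ> (\<lambda>u. t1 + u * (t2 - t1))) (\<lambda>u. s)"
proof -
  define K where "K = tan (th / 2)"
  have "0 < K" unfolding K_def using angle by (intro tan_gt_zero) auto
  define C where "C = e / (2 + K)"
  define R where "R = C * (1 + K)"
  have "0 < C" using ball(1) \<open>0 < K\<close> by (simp add: C_def)
  have "C + R = C * (2 + K)" by (simp add: R_def algebra_simps)
  also have "\<dots> = e" using \<open>0 < K\<close> by (simp add: C_def)
  finally have "C + R = e" .
  have near: "\<forall>u\<in>{t0 - R..t0 + R}. dist (g u) s < e"
  proof
    fix u assume "u \<in> {t0 - R..t0 + R}"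
    then have "dist (g u) (g t0) \<le> R" using local_isometric_dist_le[OF local_isometric, of u t0] by auto
    then show "dist (g u) s < e"
      using dist_triangle[of "g u" s "g t0"] close \<open>C + R = e\<close> by (simp add: C_def K_def)
  qed
  define P where "P A u = of_real (dist (g u) s) * cis (A u)" for A u
  have "t0 \<in> {t0 - R..t0 + R}" using \<open>0 < C\<close> \<open>0 < K\<close> by (simp add: R_def)
  from development_affine[OF this near] obtain A w where A: "continuous_on {t0 - R..t0 + R} A"
      "\<And>u. u \<in> {t0 - R..t0 + R} \<Longrightarrow> \<exists>k::int. snd (f (g u)) = A u + of_int k * th"
    and "cmod w = 1" and affine: "\<And>u. u \<in> {t0 - R..t0 + R} \<Longrightarrow> P A u = P A t0 + of_real (u - t0) * w"
    unfolding P_def by blast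
  obtain m0 p where foot: "Re (p * cnj w) = 0" "cmod p \<le> cmod (P A t0)" "\<bar>m0\<bar> \<le> cmod (P A t0)"
      "\<And>u. P A t0 + of_real u * w = p + of_real (u - m0) * w"
    using line_foot_point[OF \<open>cmod w = 1\<close>] by blast
  define m where "m = t0 + m0"
  have line: "P A u = p + of_real (u - m) * w" if "u \<in> {t0 - R..t0 + R}" for u
  proof -
    have "P A u = p + of_real (u - t0 - m0) * w" unfolding affine[OF that] by (rule foot(4))
    also have "u - t0 - m0 = u - m" by (simp add: m_def)
    finally show ?thesis .
  qed
  have "cmod (P A t0) < C" using close by (simp add: P_def norm_mult C_def K_def)
  then have "-C < m0" "m0 < C" using foot(3) by linarith+
  moreover have "0 < C * K" using \<open>0 < K\<close> \<open>0 < C\<close> by simp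
  ultimately have "m \<in> {t0 - R..t0 + R}" by (simp add: m_def R_def algebra_simps)
  then have "0 < cmod p" using line curve_near_vertex(2) near by (force simp: P_def norm_mult)
  define V where "V = cmod p * K"
  have "0 < V" using \<open>0 < cmod p\<close> \<open>0 < K\<close> by (simp add: V_def)
  have "V < C * K" using foot(2) \<open>cmod (P A t0) < C\<close> \<open>0 < K\<close> by (simp add: V_def)
  then have window: "{m - V..m + V} \<subseteq> {t0 - R..t0 + R}"
    using \<open>-C < m0\<close> \<open>m0 < C\<close> by (auto simp: m_def R_def algebra_simps)
  have "g (m - V) = g (m + V)"
  proof (rule symmetric_times_coincide)
    show "continuous_on {m - V..m + V} A" using A(1) window by (rule continuous_on_subset)
  qed (use A(2) near window line \<open>cmod w = 1\<close> foot(1) \<open>0 < cmod p\<close> in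
      \<open>auto simp: P_def V_def K_def\<close>)
  moreover have "homotopic_loops UNIV (g \<circ> (\<lambda>u. (m - V) + u * ((m + V) - (m - V)))) (\<lambda>u. s)"
    using \<open>0 < V\<close> calculation near window by (intro segment_loop_nullhomotopic) auto
  ultimately show ?thesis using that[of "m - V" "m + V"] \<open>0 < V\<close> by simp
qed

end

lemma geodesic_dist_acute_cone_point_ge:
  fixes s :: "'a::metric_space"
  assumes "0 < th" "th < pi" "conical_point th s"
  shows "\<exists>C>0. \<forall>g t. geodesic g \<longrightarrow> C \<le> dist (g t) s"
proof -
  obtain U and f :: "'a \<Rightarrow> real \<times> real" and r where U: "open U" "s \<in> U" "f s = cone_vertex"
    "f ` U = {q \<in> cone_carrier th. fst q < r}" "\<forall>x\<in>U. \<forall>y\<in>U. cone_dist th (f x) (f y) = dist x y"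
    using assms(3) unfolding conical_point_def by blast
  obtain e where e: "0 < e" "ball s e \<subseteq> U" using open_contains_ball U(1,2) by blast
  interpret acute_cone_chart th U f r s e
    using assms(1,2) U e by unfold_locales auto
  have "e / (2 + tan (th / 2)) \<le> dist (g t) s" if geo: "geodesic g" for g :: "real \<Rightarrow> 'a" and t
  proof (rule ccontr)
    interpret acute_cone_chart_curve th U f r s e g
      using geo by unfold_locales (simp add: geodesic_def)
    assume "\<not> ?thesis"
    then have "dist (g t) s < e / (2 + tan (th / 2))" by simp
    then obtain t1 t2 where "t1 < t2" "g t1 = g t2"
        "homotopic_loops UNIV (g \<circ> (\<lambda>u. t1 + u * (t2 - t1))) (\<lambda>u. s)"
      by (rule nullhomotopic_self_intersection_near_vertex)
    then show False using geo unfolding geodesic_def by blast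
  qed
  moreover have "0 < e / (2 + tan (th / 2))" using e(1) angle by (simp add: tan_gt_zero add_pos_pos)
  ultimately show ?thesis by blast
qed

theorem lemma5p3:
  fixes Sing :: "'a::metric_space set" and th :: "'a \<Rightarrow> real"
  assumes "compact (UNIV :: 'a set)" and "connected (UNIV :: 'a set)"
    and "euclidean_cone_metric Sing th"
    and "\<forall>s\<in>Sing. th s \<in> {0<..<pi} \<union> {2*pi<..}"
  shows "\<exists>C>0. \<forall>g. geodesic g \<longrightarrow> (\<forall>s\<in>Sing. th s < pi \<longrightarrow> (\<forall>t. C \<le> dist (g t) s))"
proof -
  define A where "A = {s \<in> Sing. th s < pi}"
  have "finite A" using assms(3) unfolding euclidean_cone_metric_def A_def by simp
  have "\<exists>C>0. \<forall>g t. geodesic g \<longrightarrow> C \<le> dist (g t) s" if "s \<in> A" for s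
    using that assms(3) geodesic_dist_acute_cone_point_ge unfolding A_def euclidean_cone_metric_def by blast
  then obtain C where C: "\<And>s. s \<in> A \<Longrightarrow> 0 < C s"
    "\<And>s g t. s \<in> A \<Longrightarrow> geodesic g \<Longrightarrow> C s \<le> dist (g t) s"
    by metis
  define C0 where "C0 = Min (insert 1 (C ` A))"
  have "0 < C0" using \<open>finite A\<close> C(1) by (simp add: C0_def)
  moreover have "C0 \<le> dist (g t) s" if "geodesic g" "s \<in> A" for g t s
  proof -
    have "C0 \<le> C s" unfolding C0_def using \<open>finite A\<close> that(2) by (intro Min_le) auto
    then show ?thesis using C(2)[OF that(2,1), of t] by linarith
  qed
  ultimately show ?thesis unfolding A_def by blast
qed

end
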